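(* Let $\mathbb K$ be a field of characteristic $2$ and $D\in\mathbb K[X]$. There exist $p,q\in\mathbb K[X]$ with $q\ne0$ and $\eta\in\mathbb K^*$ such that $p^2-Dq^2=\eta$ if and only if there exist $E\in\mathbb K[X]$ and $r\in\mathbb K$ with $D=E^2+r$. Moreover, one can take $r=0$ (i.e. $D$ is a square in $\mathbb K[X]$) if and only if there is such a solution with $\eta$ a square in $\mathbb K$. *)

theory Defs
  imports "HOL-Computational_Algebra.Polynomial"
begin

end

theory Submission
  imports Defs
begin

text \<open>In characteristic 2 squaring is additive, so \<open>p\<^sup>2 - D q\<^sup>2\<close> is unchanged when \<open>p\<close> is
  replaced by \<open>p + m q\<close> and \<open>D\<close> by \<open>D + m\<^sup>2\<close>. Comparing leading terms in \<open>p\<^sup>2 = D q\<^sup>2 + \<eta>\<close>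
  shows that the leading term of a nonconstant \<open>D\<close> is a square \<open>m\<^sup>2\<close>; removing it lowers the
  degree of \<open>D\<close>, and by induction \<open>D\<close> is a square up to a constant \<open>r\<close>. If moreover \<open>\<eta> = s\<^sup>2\<close>,
  then \<open>t = p + E q + s\<close> satisfies \<open>t\<^sup>2 = r q\<^sup>2\<close>, so \<open>r\<close> is a square in \<open>\<bbbK>\<close> and \<open>D = (E + \<surd>r)\<^sup>2\<close>.\<close>

lemma two_eq_zero_if_CHAR_2:
  assumes "CHAR('a::comm_ring_1) = 2"
  shows "(2::'a) = 0"
  using of_nat_CHAR[where 'a='a] assms by simp

lemma minus_eq_self_if_CHAR_2:
  assumes "CHAR('a::comm_ring_1) = 2"
  shows "- (x::'a) = x"
proof -
  have "x + x = 0"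
    using two_eq_zero_if_CHAR_2[OF assms] by (metis mult_2 mult_zero_left)
  then show ?thesis
    by (simp add: eq_neg_iff_add_eq_0)
qed

lemma diff_eq_add_if_CHAR_2:
  assumes "CHAR('a::comm_ring_1) = 2"
  shows "(x::'a) - y = x + y"
  using minus_eq_self_if_CHAR_2[OF assms, of y] by simp

lemma power2_add_if_CHAR_2:
  assumes "CHAR('a::comm_ring_1) = 2"
  shows "((x::'a) + y)\<^sup>2 = x\<^sup>2 + y\<^sup>2"
proof -
  have "(x + y)\<^sup>2 = x\<^sup>2 + y\<^sup>2 + 2 * (x * y)"
    by (simp add: power2_eq_square algebra_simps)
  then show ?thesis
    using two_eq_zero_if_CHAR_2[OF assms] by simp
qed

lemma pell_form_shift_if_CHAR_2:
  assumes "CHAR('a::comm_ring_1) = 2"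
  shows "((p::'a) + m * q)\<^sup>2 - (D + m\<^sup>2) * q\<^sup>2 = p\<^sup>2 - D * q\<^sup>2"
proof -
  have "(p + m * q)\<^sup>2 - (D + m\<^sup>2) * q\<^sup>2 = p\<^sup>2 - D * q\<^sup>2 + 2 * (m\<^sup>2 * q\<^sup>2)"
    unfolding diff_eq_add_if_CHAR_2[OF assms] power2_add_if_CHAR_2[OF assms]
    by (simp add: algebra_simps)
  then show ?thesis
    using two_eq_zero_if_CHAR_2[OF assms] by simp
qed

lemma pell_leading_term_square:
  fixes D p q :: "'a::field poly"
  assumes "q \<noteq> 0" and "0 < degree D" and pell: "p\<^sup>2 - D * q\<^sup>2 = [:\<eta>:]"
  shows "\<exists>m. degree (D - m\<^sup>2) < degree D"
proof -
  have "D \<noteq> 0"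
    using assms(2) by auto
  have p2: "p\<^sup>2 = D * q\<^sup>2 + [:\<eta>:]"
    using pell by (simp add: algebra_simps)
  have deg_Dq2: "degree (D * q\<^sup>2) = degree D + 2 * degree q"
    using \<open>D \<noteq> 0\<close> \<open>q \<noteq> 0\<close> by (simp add: degree_mult_eq degree_power_eq)
  then have const_lower: "degree [:\<eta>:] < degree (D * q\<^sup>2)"
    using assms(2) by simp
  then have "degree (p\<^sup>2) = degree D + 2 * degree q"
    using p2 deg_Dq2 by (simp add: degree_add_eq_left)
  moreover from this have "p \<noteq> 0"
    using assms(2) by auto
  ultimately have deg_D: "degree D = 2 * (degree p - degree q)"
    by (simp add: degree_power_eq)
  have "lead_coeff (p\<^sup>2) = lead_coeff ([:\<eta>:] + D * q\<^sup>2)"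
    using p2 by (simp add: add.commute)
  also have "\<dots> = lead_coeff (D * q\<^sup>2)"
    using const_lower by (rule lead_coeff_add_le)
  finally have "lead_coeff p ^ 2 = lead_coeff D * lead_coeff q ^ 2"
    by (simp add: lead_coeff_mult lead_coeff_power)
  then have "(lead_coeff p / lead_coeff q)\<^sup>2 = lead_coeff D"
    using \<open>q \<noteq> 0\<close> by (simp add: power_divide)
  then have leading_term: "(monom (lead_coeff p / lead_coeff q) (degree p - degree q))\<^sup>2
      = monom (lead_coeff D) (degree D)"
    using deg_D by (simp add: monom_power mult.commute)
  have "degree (D - monom (lead_coeff D) (degree D)) < degree D"
    using assms(2) by (intro degree_lessI) (auto simp: coeff_eq_0)
  then show ?thesis
    unfolding leading_term[symmetric] by blast
qed

lemma square_plus_const_if_pell: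
  fixes D p q :: "'a::field poly"
  assumes "CHAR('a) = 2" and "q \<noteq> 0" and "p\<^sup>2 - D * q\<^sup>2 = [:\<eta>:]"
  shows "\<exists>E r. D = E\<^sup>2 + [:r:]"
  using assms(3)
proof (induction "degree D" arbitrary: D p rule: less_induct)
  case (less D p)
  note char2 = assms(1)[folded semiring_char_poly[where 'a='a]]
  show ?case
  proof (cases "degree D = 0")
    case True
    then obtain r where "D = 0\<^sup>2 + [:r:]"
      by (metis degree_eq_zeroE zero_power2 add_0)
    then show ?thesis by blast
  next
    case False
    then obtain m where lower: "degree (D - m\<^sup>2) < degree D"
      using pell_leading_term_square[OF \<open>q \<noteq> 0\<close> _ less.prems] by blast
    have "(p + m * q)\<^sup>2 - (D - m\<^sup>2) * q\<^sup>2 = [:\<eta>:]"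
      using pell_form_shift_if_CHAR_2[OF char2, of p m q D] less.prems
      by (simp add: diff_eq_add_if_CHAR_2[OF char2, of D])
    then obtain E r where "D - m\<^sup>2 = E\<^sup>2 + [:r:]"
      using less.hyps[OF lower] by blast
    then have "D = (E + m)\<^sup>2 + [:r:]"
      by (simp add: power2_add_if_CHAR_2[OF char2] algebra_simps)
    then show ?thesis by blast
  qed
qed

lemma const_square_if_square_eq_const_mult_square:
  fixes t q :: "'a::field poly"
  assumes "q \<noteq> 0" and "t\<^sup>2 = [:r:] * q\<^sup>2"
  shows "\<exists>c. r = c\<^sup>2"
proof -
  have "lead_coeff t ^ 2 = r * lead_coeff q ^ 2"
    using arg_cong[OF assms(2), of lead_coeff] by (simp add: lead_coeff_mult lead_coeff_power)
  then have "r = (lead_coeff t / lead_coeff q)\<^sup>2"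
    using assms(1) by (simp add: power_divide)
  then show ?thesis ..
qed

lemma square_if_pell_square:
  fixes D p q :: "'a::field poly"
  assumes char2: "CHAR('a) = 2" and "q \<noteq> 0" and pell: "p\<^sup>2 - D * q\<^sup>2 = [:s\<^sup>2:]"
  shows "\<exists>E. D = E\<^sup>2"
proof -
  note char2_poly = char2[folded semiring_char_poly[where 'a='a]]
  note add_sq = power2_add_if_CHAR_2[OF char2_poly] and
    sub_add = diff_eq_add_if_CHAR_2[OF char2_poly] and
    two_zero = two_eq_zero_if_CHAR_2[OF char2_poly]
  obtain E r where D: "D = E\<^sup>2 + [:r:]"
    using square_plus_const_if_pell[OF char2 \<open>q \<noteq> 0\<close> pell] by blast
  have "[:s:]\<^sup>2 = p\<^sup>2 + D * q\<^sup>2"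
    using pell by (simp add: sub_add power2_eq_square)
  then have "(p + E * q + [:s:])\<^sup>2 = 2 * p\<^sup>2 + 2 * (E\<^sup>2 * q\<^sup>2) + [:r:] * q\<^sup>2"
    unfolding add_sq D by (simp add: algebra_simps)
  then have "(p + E * q + [:s:])\<^sup>2 = [:r:] * q\<^sup>2"
    by (simp add: two_zero)
  then obtain c where "r = c\<^sup>2"
    using const_square_if_square_eq_const_mult_square[OF \<open>q \<noteq> 0\<close>] by blast
  then have "D = (E + [:c:])\<^sup>2"
    unfolding D add_sq by (simp add: power2_eq_square)
  then show ?thesis ..
qed

theorem mainTheorem18:
  fixes D :: "'a::field poly"
  assumes "CHAR('a) = 2"
  shows "((\<exists>p q \<eta>. q \<noteq> 0 \<and> \<eta> \<noteq> 0 \<and> p\<^sup>2 - D * q\<^sup>2 = [:\<eta>:])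
            \<longleftrightarrow> (\<exists>E r. D = E\<^sup>2 + [:r:]))
       \<and> ((\<exists>E. D = E\<^sup>2)
            \<longleftrightarrow> (\<exists>p q \<eta>. q \<noteq> 0 \<and> \<eta> \<noteq> 0 \<and> p\<^sup>2 - D * q\<^sup>2 = [:\<eta>:]
                         \<and> (\<exists>s. \<eta> = s\<^sup>2)))"
proof -
  note char2_poly = assms[folded semiring_char_poly[where 'a='a]]
  have square_solution: "(E + 1)\<^sup>2 - D * 1\<^sup>2 = [:1:]" if "D = E\<^sup>2" for E
    using that power2_add_if_CHAR_2[OF char2_poly, of E 1] by (simp add: pCons_one)
  have "\<exists>p q \<eta>. q \<noteq> 0 \<and> \<eta> \<noteq> 0 \<and> p\<^sup>2 - D * q\<^sup>2 = [:\<eta>:]" if "D = E\<^sup>2 + [:r:]" for E r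
  proof (cases "r = 0")
    case True
    then have "(E + 1)\<^sup>2 - D * 1\<^sup>2 = [:1:]"
      using that square_solution by simp
    then show ?thesis
      by (metis one_neq_zero)
  next
    case False
    have "E\<^sup>2 - D * 1\<^sup>2 = [:-r:]"
      using that by simp
    then show ?thesis
      using False by (metis neg_equal_0_iff_equal one_neq_zero)
  qed
  moreover have "\<exists>p q \<eta>. q \<noteq> 0 \<and> \<eta> \<noteq> 0 \<and> p\<^sup>2 - D * q\<^sup>2 = [:\<eta>:] \<and> (\<exists>s. \<eta> = s\<^sup>2)"
    if "D = E\<^sup>2" for E
    using square_solution[OF that] by (metis one_neq_zero power_one)
  ultimately show ?thesis
    using square_plus_const_if_pell[OF assms] square_if_pell_square[OF assms] by blast
qed

end
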